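(* Let $G$ be a connected (fork, co-dart)-free graph. Then either $G$ has a homogeneous set, or for every vertex $v$ of $G$, $G[M(v)]$ is perfect.
   Context: All graphs are finite and simple. For a vertex $v$, $M(v)=V(G)\setminus(N(v)\cup\{v\})$ is the set of non-neighbours of $v$. The fork is obtained from $K_{1,3}$ by subdividing one edge once. The paw is a triangle with one pendant vertex attached; the co-dart is the disjoint union of a paw and an isolated vertex. $G$ is $(H_1,H_2)$-free if it has no induced subgraph isomorphic to $H_1$ or $H_2$. A set $S\subseteq V(G)$ is a homogeneous set if $1<|S|<|V(G)|$ and every vertex outside $S$ is adjacent to all or to none of the vertices of $S$. A graph is perfect if every induced subgraph $H$ satisfies $\chi(H)=\omega(H)$. *)

theory Defs
  imports Main
begin

definition graph :: "'a set \<Rightarrow> ('a \<Rightarrow> 'a \<Rightarrow> bool) \<Rightarrow> bool" where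
  "graph V E \<longleftrightarrow> finite V \<and> (\<forall>x y. E x y \<longrightarrow> x \<in> V \<and> y \<in> V)
     \<and> (\<forall>x y. E x y \<longrightarrow> E y x) \<and> (\<forall>x. \<not> E x x)"

definition induced :: "('a \<Rightarrow> 'a \<Rightarrow> bool) \<Rightarrow> 'a set \<Rightarrow> 'a \<Rightarrow> 'a \<Rightarrow> bool" where
  "induced E S = (\<lambda>x y. E x y \<and> x \<in> S \<and> y \<in> S)"

definition has_induced :: "'a set \<Rightarrow> ('a \<Rightarrow> 'a \<Rightarrow> bool) \<Rightarrow> 'b set \<Rightarrow> ('b \<Rightarrow> 'b \<Rightarrow> bool) \<Rightarrow> bool" where
  "has_induced V E W F \<longleftrightarrow>
     (\<exists>f. inj_on f W \<and> f ` W \<subseteq> V \<and> (\<forall>x\<in>W. \<forall>y\<in>W. F x y \<longleftrightarrow> E (f x) (f y)))"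

definition sym_edges :: "(nat \<times> nat) list \<Rightarrow> nat \<Rightarrow> nat \<Rightarrow> bool" where
  "sym_edges L = (\<lambda>x y. (x, y) \<in> set L \<or> (y, x) \<in> set L)"

text \<open>Fork: K_{1,3} with centre 0 and leaves 1,2,4, the edge 0-4 subdivided by 3.\<close>
definition fork_V :: "nat set" where "fork_V = {0..4}"
definition fork_E :: "nat \<Rightarrow> nat \<Rightarrow> bool" where
  "fork_E = sym_edges [(0,1),(0,2),(0,3),(3,4)]"

text \<open>Co-dart: paw (triangle 0,1,2 with pendant 3 attached to 0) plus isolated vertex 4.\<close>
definition codart_V :: "nat set" where "codart_V = {0..4}"
definition codart_E :: "nat \<Rightarrow> nat \<Rightarrow> bool" where
  "codart_E = sym_edges [(0,1),(1,2),(0,2),(0,3)]"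

definition connected_graph :: "'a set \<Rightarrow> ('a \<Rightarrow> 'a \<Rightarrow> bool) \<Rightarrow> bool" where
  "connected_graph V E \<longleftrightarrow> (\<forall>x\<in>V. \<forall>y\<in>V. E\<^sup>*\<^sup>* x y)"

definition nonnbrs :: "'a set \<Rightarrow> ('a \<Rightarrow> 'a \<Rightarrow> bool) \<Rightarrow> 'a \<Rightarrow> 'a set" where
  "nonnbrs V E v = V - ({u. E v u} \<union> {v})"

definition homogeneous_set :: "'a set \<Rightarrow> ('a \<Rightarrow> 'a \<Rightarrow> bool) \<Rightarrow> 'a set \<Rightarrow> bool" where
  "homogeneous_set V E S \<longleftrightarrow> S \<subseteq> V \<and> 1 < card S \<and> card S < card V \<and>
     (\<forall>v\<in>V - S. (\<forall>s\<in>S. E v s) \<or> (\<forall>s\<in>S. \<not> E v s))"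

definition proper_colouring :: "'a set \<Rightarrow> ('a \<Rightarrow> 'a \<Rightarrow> bool) \<Rightarrow> nat \<Rightarrow> ('a \<Rightarrow> nat) \<Rightarrow> bool" where
  "proper_colouring V E k c \<longleftrightarrow> c ` V \<subseteq> {..<k} \<and> (\<forall>x\<in>V. \<forall>y\<in>V. E x y \<longrightarrow> c x \<noteq> c y)"

definition chromatic_number :: "'a set \<Rightarrow> ('a \<Rightarrow> 'a \<Rightarrow> bool) \<Rightarrow> nat" where
  "chromatic_number V E = (LEAST k. \<exists>c. proper_colouring V E k c)"

definition clique :: "'a set \<Rightarrow> ('a \<Rightarrow> 'a \<Rightarrow> bool) \<Rightarrow> 'a set \<Rightarrow> bool" where
  "clique V E C \<longleftrightarrow> C \<subseteq> V \<and> (\<forall>x\<in>C. \<forall>y\<in>C. x \<noteq> y \<longrightarrow> E x y)"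

definition clique_number :: "'a set \<Rightarrow> ('a \<Rightarrow> 'a \<Rightarrow> bool) \<Rightarrow> nat" where
  "clique_number V E = Max (card ` {C. clique V E C})"

definition perfect :: "'a set \<Rightarrow> ('a \<Rightarrow> 'a \<Rightarrow> bool) \<Rightarrow> bool" where
  "perfect V E \<longleftrightarrow> (\<forall>S\<subseteq>V. chromatic_number S (induced E S) = clique_number S (induced E S))"

end

theory Submission
  imports Defs
begin

(* Fix v and suppose G has no homogeneous set. Since G is co-dart-free, M(v) is paw-free.
   M(v) contains no odd hole either: a neighbour of v that sees a vertex of such a hole sees
   all of it (fork and co-dart arguments), while a vertex of M(v) sees no two consecutive hole
   vertices (paw-freeness); hence the hole together with the vertices seeing part but not all
   of it is a homogeneous set not containing v. Finally, every induced subgraph of a paw-free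
   graph without odd holes satisfies chi = omega: a connected one is, by Olariu's theorem,
   complete multipartite if it has a triangle and otherwise bipartite, because a shortest odd
   closed walk of length at least 5 is an odd hole. *)

section \<open>Induced forks and co-darts\<close>

lemma has_induced_forkI:
  assumes "a0 \<in> V" "a1 \<in> V" "a2 \<in> V" "a3 \<in> V" "a4 \<in> V"
    and sym: "\<And>x y. E x y \<Longrightarrow> E y x" and irr: "\<And>x. \<not> E x x"
    and e: "E a0 a1" "E a0 a2" "E a0 a3" "E a3 a4"
    and ne: "\<not> E a1 a2" "\<not> E a1 a3" "\<not> E a1 a4" "\<not> E a2 a3" "\<not> E a2 a4" "\<not> E a0 a4"
    and "a1 \<noteq> a2"
  shows "has_induced V E fork_V fork_E"
proof -
  define f where "f = (\<lambda>i::nat. if i = 0 then a0 else if i = 1 then a1 else if i = 2 then a2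
    else if i = 3 then a3 else a4)"
  have fork_V: "fork_V = {0, 1, 2, 3, 4}" by (auto simp: fork_V_def)
  have "a0 \<noteq> a1" "a0 \<noteq> a2" "a0 \<noteq> a3" "a0 \<noteq> a4" "a1 \<noteq> a3" "a1 \<noteq> a4" "a2 \<noteq> a3"
    "a2 \<noteq> a4" "a3 \<noteq> a4"
    using e ne irr sym by metis+
  moreover have "E a1 a0" "E a2 a0" "E a3 a0" "E a4 a3"
    and "\<not> E a2 a1" "\<not> E a3 a1" "\<not> E a4 a1" "\<not> E a3 a2" "\<not> E a4 a2" "\<not> E a4 a0"
    using e ne sym by blast+
  ultimately have "inj_on f fork_V" "f ` fork_V \<subseteq> V"
    "\<forall>x\<in>fork_V. \<forall>y\<in>fork_V. fork_E x y \<longleftrightarrow> E (f x) (f y)"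
    using assms(1-5) e ne irr \<open>a1 \<noteq> a2\<close> unfolding fork_V f_def fork_E_def sym_edges_def by (simp_all add: inj_on_def)
  then show ?thesis unfolding has_induced_def by blast
qed

lemma has_induced_codartI:
  assumes "a0 \<in> V" "a1 \<in> V" "a2 \<in> V" "a3 \<in> V" "a4 \<in> V"
    and sym: "\<And>x y. E x y \<Longrightarrow> E y x" and irr: "\<And>x. \<not> E x x"
    and e: "E a0 a1" "E a1 a2" "E a0 a2" "E a0 a3"
    and ne: "\<not> E a1 a3" "\<not> E a2 a3" "\<not> E a0 a4" "\<not> E a1 a4" "\<not> E a2 a4" "\<not> E a3 a4"
  shows "has_induced V E codart_V codart_E"
proof -
  define f where "f = (\<lambda>i::nat. if i = 0 then a0 else if i = 1 then a1 else if i = 2 then a2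
    else if i = 3 then a3 else a4)"
  have codart_V: "codart_V = {0, 1, 2, 3, 4}" by (auto simp: codart_V_def)
  have "a0 \<noteq> a1" "a0 \<noteq> a2" "a0 \<noteq> a3" "a0 \<noteq> a4" "a1 \<noteq> a2" "a1 \<noteq> a3" "a1 \<noteq> a4"
    "a2 \<noteq> a3" "a2 \<noteq> a4" "a3 \<noteq> a4"
    using e ne irr sym by metis+
  moreover have "E a1 a0" "E a2 a1" "E a2 a0" "E a3 a0"
    and "\<not> E a3 a1" "\<not> E a3 a2" "\<not> E a4 a0" "\<not> E a4 a1" "\<not> E a4 a2" "\<not> E a4 a3"
    using e ne sym by blast+
  ultimately have "inj_on f codart_V" "f ` codart_V \<subseteq> V"
    "\<forall>x\<in>codart_V. \<forall>y\<in>codart_V. codart_E x y \<longleftrightarrow> E (f x) (f y)"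
    using assms(1-5) e ne irr unfolding codart_V f_def codart_E_def sym_edges_def by (simp_all add: inj_on_def)
  then show ?thesis unfolding has_induced_def by blast
qed

section \<open>Colourings matched by cliques\<close>

text \<open>A certificate for chi = omega.\<close>

definition clique_colourable :: "'a set \<Rightarrow> ('a \<Rightarrow> 'a \<Rightarrow> bool) \<Rightarrow> bool" where
  "clique_colourable V E \<longleftrightarrow> (\<exists>k c C. proper_colouring V E k c \<and> clique V E C \<and> card C = k)"

lemma card_clique_le_colours:
  assumes "proper_colouring V E k c" "clique V E C"
  shows "card C \<le> k"
proof -
  have "C \<subseteq> V" using assms(2) by (simp add: clique_def)
  then have "inj_on c C" "c ` C \<subseteq> {..<k}"
    using assms unfolding inj_on_def proper_colouring_def clique_def by blast+
  then show ?thesis using card_inj_on_le[of c C "{..<k}"] by simp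
qed

lemma chromatic_number_eq_clique_number:
  assumes "finite V" "clique_colourable V E"
  shows "chromatic_number V E = clique_number V E"
proof -
  obtain k c C where c: "proper_colouring V E k c" and C: "clique V E C" "card C = k"
    using assms(2) by (auto simp: clique_colourable_def)
  have "\<exists>c'. proper_colouring V E (chromatic_number V E) c'"
    unfolding chromatic_number_def by (rule LeastI) (use c in blast)
  then have "k \<le> chromatic_number V E" using card_clique_le_colours C by blast
  moreover have "chromatic_number V E \<le> k"
    unfolding chromatic_number_def by (rule Least_le) (use c in blast)
  moreover have "finite (card ` {C. clique V E C})"
    by (rule finite_imageI, rule finite_subset[of _ "Pow V"]) (auto simp: clique_def assms(1))
  then have "clique_number V E = k"
    unfolding clique_number_def using card_clique_le_colours[OF c] C by (intro Max_eqI) auto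
  ultimately show ?thesis by simp
qed

lemma clique_colourable_empty: "clique_colourable {} E"
  unfolding clique_colourable_def proper_colouring_def clique_def by auto

lemma clique_colourable_Un:
  assumes "K \<inter> L = {}" and no_edge: "\<And>x y. x \<in> K \<Longrightarrow> y \<in> L \<Longrightarrow> \<not> E x y \<and> \<not> E y x"
    and "clique_colourable K (induced E K)" "clique_colourable L (induced E L)"
  shows "clique_colourable (K \<union> L) (induced E (K \<union> L))"
proof -
  obtain k1 c1 C1 where c1: "proper_colouring K (induced E K) k1 c1"
    and C1: "clique K (induced E K) C1" "card C1 = k1"
    using assms(3) by (auto simp: clique_colourable_def)
  obtain k2 c2 C2 where c2: "proper_colouring L (induced E L) k2 c2"
    and C2: "clique L (induced E L) C2" "card C2 = k2"
    using assms(4) by (auto simp: clique_colourable_def)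
  define c where "c x = (if x \<in> K then c1 x else c2 x)" for x
  have "c ` (K \<union> L) \<subseteq> {..<max k1 k2}"
    using c1 c2 unfolding proper_colouring_def c_def by (auto simp: less_max_iff_disj)
  moreover have "c x \<noteq> c y" if "x \<in> K \<union> L" "y \<in> K \<union> L" "E x y" for x y
  proof -
    have "x \<in> K \<and> y \<in> K \<or> x \<in> L \<and> y \<in> L \<and> x \<notin> K \<and> y \<notin> K"
      using that no_edge \<open>K \<inter> L = {}\<close> by blast
    then show ?thesis
      using c1 c2 \<open>E x y\<close> unfolding proper_colouring_def c_def induced_def by auto
  qed
  ultimately have "proper_colouring (K \<union> L) (induced E (K \<union> L)) (max k1 k2) c"
    unfolding proper_colouring_def induced_def by blast
  moreover have "clique (K \<union> L) (induced E (K \<union> L)) C1" "clique (K \<union> L) (induced E (K \<union> L)) C2"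
    using C1 C2 unfolding clique_def induced_def by auto
  ultimately show ?thesis
    unfolding clique_colourable_def using C1(2) C2(2) by (metis max_def)
qed

text \<open>P becomes a new colour class; a clique of T - P is complete to x and extends by x.\<close>

lemma clique_colourable_add_class:
  assumes "finite T" "x \<in> T" and P: "P = {y \<in> T. y = x \<or> \<not> E x y}"
    and indep: "\<And>y z. y \<in> P \<Longrightarrow> z \<in> P \<Longrightarrow> \<not> E y z"
    and sym: "\<And>x y. E x y \<Longrightarrow> E y x"
    and "clique_colourable (T - P) (induced E (T - P))"
  shows "clique_colourable T (induced E T)"
proof -
  obtain k c C where c: "proper_colouring (T - P) (induced E (T - P)) k c"
    and C: "clique (T - P) (induced E (T - P)) C" "card C = k"
    using assms(6) by (auto simp: clique_colourable_def)
  define c' where "c' y = (if y \<in> P then k else c y)" for y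
  have "c' ` T \<subseteq> {..<Suc k}"
    using c unfolding proper_colouring_def c'_def by auto
  moreover have "c' y \<noteq> c' z" if "y \<in> T" "z \<in> T" "E y z" for y z
    using c indep[of y z] that unfolding proper_colouring_def c'_def induced_def by auto
  ultimately have "proper_colouring T (induced E T) (Suc k) c'"
    unfolding proper_colouring_def induced_def by blast
  moreover have "clique T (induced E T) (insert x C)"
  proof -
    have "E x w" "E w x" if "w \<in> C" for w
      using C(1) that sym[of x w] unfolding clique_def P by auto
    then show ?thesis
      using C(1) \<open>x \<in> T\<close> unfolding clique_def induced_def by auto
  qed
  moreover have "card (insert x C) = Suc k"
  proof -
    have "C \<subseteq> T - P" using C(1) by (simp add: clique_def)
    then have "x \<notin> C" "finite C"
      using \<open>x \<in> T\<close> P finite_subset[of C T] \<open>finite T\<close> by auto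
    then show ?thesis using C(2) by simp
  qed
  ultimately show ?thesis unfolding clique_colourable_def by blast
qed

section \<open>Odd closed walks and odd holes\<close>

definition walk :: "('a \<Rightarrow> 'a \<Rightarrow> bool) \<Rightarrow> (nat \<Rightarrow> 'a) \<Rightarrow> nat \<Rightarrow> bool" where
  "walk R g n \<longleftrightarrow> (\<forall>i<n. R (g i) (g (Suc i)))"

definition odd_closed_walk :: "('a \<Rightarrow> 'a \<Rightarrow> bool) \<Rightarrow> (nat \<Rightarrow> 'a) \<Rightarrow> nat \<Rightarrow> bool" where
  "odd_closed_walk R g n \<longleftrightarrow> walk R g n \<and> g 0 = g n \<and> odd n"

definition shortest_odd_closed_walk :: "('a \<Rightarrow> 'a \<Rightarrow> bool) \<Rightarrow> (nat \<Rightarrow> 'a) \<Rightarrow> nat \<Rightarrow> bool" where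
  "shortest_odd_closed_walk R g n \<longleftrightarrow>
     odd_closed_walk R g n \<and> (\<forall>h m. m < n \<longrightarrow> \<not> odd_closed_walk R h m)"

lemma rtranclp_imp_walk:
  assumes "R\<^sup>*\<^sup>* x y"
  shows "\<exists>g m. walk R g m \<and> g 0 = x \<and> g m = y"
  using assms
proof (induction rule: rtranclp_induct)
  case base
  show ?case by (rule exI[of _ "\<lambda>_. x"], rule exI[of _ 0]) (simp add: walk_def)
next
  case (step y z)
  then obtain g m where g: "walk R g m" "g 0 = x" "g m = y" by blast
  have "walk R (g(Suc m := z)) (Suc m)"
    using g step(2) unfolding walk_def by (auto simp: less_Suc_eq)
  moreover have "(g(Suc m := z)) 0 = x" "(g(Suc m := z)) (Suc m) = z" using g by auto
  ultimately show ?case by blast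
qed

lemma walks_close_up:
  assumes sym: "\<And>x y. R x y \<Longrightarrow> R y x"
    and "walk R g1 m1" "walk R g2 m2" "g1 0 = g2 0" "R (g1 m1) (g2 m2)"
  shows "\<exists>h. walk R h (m1 + 1 + m2) \<and> h 0 = h (m1 + 1 + m2)"
proof -
  define h where "h k = (if k \<le> m1 then g1 k else g2 (m1 + 1 + m2 - k))" for k
  have "R (h k) (h (Suc k))" if "k < m1 + 1 + m2" for k
  proof (cases "k < m1")
    case True
    then show ?thesis using assms(2) by (simp add: h_def walk_def)
  next
    case False
    define l where "l = m1 + m2 - k"
    have "k = m1 \<or> (l < m2 \<and> m1 + 1 + m2 - k = Suc l \<and> m1 + 1 + m2 - Suc k = l)"
      using False that by (auto simp: l_def)
    then show ?thesis
      using assms(3,5) sym[of "g2 l" "g2 (Suc l)"] False by (auto simp: h_def walk_def)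
  qed
  moreover have "h 0 = h (m1 + 1 + m2)" using assms(4) by (simp add: h_def)
  ultimately show ?thesis unfolding walk_def by blast
qed

lemma two_colouring_if_no_odd_closed_walk:
  assumes sym: "\<And>x y. R x y \<Longrightarrow> R y x"
    and reach: "\<forall>y\<in>T. R\<^sup>*\<^sup>* x y" and no_odd: "\<And>g n. \<not> odd_closed_walk R g n"
  shows "proper_colouring T R 2 (\<lambda>y. if \<exists>g m. walk R g m \<and> g 0 = x \<and> g m = y \<and> even m then 0 else 1)"
    (is "proper_colouring T R 2 ?c")
  unfolding proper_colouring_def
proof (intro conjI ballI impI)
  show "?c ` T \<subseteq> {..<2}" by auto
next
  fix y z assume yz: "y \<in> T" "z \<in> T" "R y z"
  show "?c y \<noteq> ?c z"
  proof
    assume same: "?c y = ?c z"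
    obtain g1 m1 g2 m2 where w: "walk R g1 m1" "g1 0 = x" "g1 m1 = y"
      "walk R g2 m2" "g2 0 = x" "g2 m2 = z" and odd: "odd (m1 + 1 + m2)"
    proof (cases "?c y = 0")
      case True
      obtain g1 m1 where "walk R g1 m1" "g1 0 = x" "g1 m1 = y" "even m1"
        using True by (auto split: if_splits)
      moreover obtain g2 m2 where "walk R g2 m2" "g2 0 = x" "g2 m2 = z" "even m2"
        using True same by (auto split: if_splits)
      ultimately show ?thesis using that by auto
    next
      case False
      obtain g1 m1 g2 m2 where "walk R g1 m1" "g1 0 = x" "g1 m1 = y"
        "walk R g2 m2" "g2 0 = x" "g2 m2 = z"
        using rtranclp_imp_walk reach yz by metis
      moreover from this have "odd m1" "odd m2" using False same by (auto split: if_splits)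
      ultimately show ?thesis using that by auto
    qed
    moreover obtain h where "walk R h (m1 + 1 + m2)" "h 0 = h (m1 + 1 + m2)"
      using walks_close_up[OF sym w(1,4)] w yz by auto
    then have "odd_closed_walk R h (m1 + 1 + m2)" using odd by (simp add: odd_closed_walk_def)
    with no_odd show False by blast
  qed
qed

lemma shortest_odd_closed_walk_exists:
  assumes "odd_closed_walk R g n"
  shows "\<exists>g n. shortest_odd_closed_walk R g n"
proof -
  define n0 where "n0 = (LEAST n. \<exists>g. odd_closed_walk R g n)"
  have "\<exists>g. odd_closed_walk R g n0" unfolding n0_def by (rule LeastI) (use assms in blast)
  moreover have "\<not> odd_closed_walk R h m" if "m < n0" for h m
    using not_less_Least[of m "\<lambda>n. \<exists>g. odd_closed_walk R g n"] that unfolding n0_def by blast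
  ultimately show ?thesis unfolding shortest_odd_closed_walk_def by blast
qed

text \<open>A repeated vertex splits a closed walk into two shorter closed walks, one of them odd.\<close>

lemma shortest_odd_closed_walk_distinct:
  assumes w: "shortest_odd_closed_walk R g n" and "i < j" "j < n"
  shows "g i \<noteq> g j"
proof
  assume eq: "g i = g j"
  have W: "\<And>l. l < n \<Longrightarrow> R (g l) (g (Suc l))" and "g 0 = g n" "odd n"
    using w unfolding shortest_odd_closed_walk_def odd_closed_walk_def walk_def by auto
  define g1 where "g1 k = g (i + k)" for k
  define g2 where "g2 k = (if k \<le> i then g k else g (k + (j - i)))" for k
  have "walk R g1 (j - i)" "g1 0 = g1 (j - i)"
    using W eq \<open>j < n\<close> \<open>i < j\<close> unfolding walk_def g1_def by auto
  moreover have "walk R g2 (n - (j - i))"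
    unfolding walk_def
  proof (intro allI impI)
    fix k assume "k < n - (j - i)"
    then show "R (g2 k) (g2 (Suc k))"
      using W[of k] W[of j] W[of "k + (j - i)"] eq \<open>i < j\<close> \<open>j < n\<close>
      by (cases k i rule: linorder_cases) (auto simp: g2_def)
  qed
  moreover have "g2 0 = g2 (n - (j - i))"
    using \<open>g 0 = g n\<close> \<open>i < j\<close> \<open>j < n\<close> by (simp add: g2_def)
  moreover have "odd (j - i) \<or> odd (n - (j - i))" using \<open>odd n\<close> \<open>i < j\<close> \<open>j < n\<close> by auto
  moreover have "j - i < n" "n - (j - i) < n" using \<open>i < j\<close> \<open>j < n\<close> by auto
  ultimately show False
    using w unfolding shortest_odd_closed_walk_def odd_closed_walk_def by blast
qed

text \<open>A chord splits the walk into two shorter closed walks through the chord, one of them odd.\<close>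

lemma shortest_odd_closed_walk_chordless:
  assumes sym: "\<And>x y. R x y \<Longrightarrow> R y x"
    and w: "shortest_odd_closed_walk R g n" and "i < j" "j < n" and chord: "R (g i) (g j)"
  shows "j = Suc i \<or> (i = 0 \<and> j = n - 1)"
proof (rule ccontr)
  assume not_edge: "\<not> (j = Suc i \<or> (i = 0 \<and> j = n - 1))"
  have W: "\<And>l. l < n \<Longrightarrow> R (g l) (g (Suc l))" and "g 0 = g n" "odd n"
    using w unfolding shortest_odd_closed_walk_def odd_closed_walk_def walk_def by auto
  define g1 where "g1 k = (if k \<le> j - i then g (i + k) else g i)" for k
  define g2 where "g2 k = (if k \<le> i then g k else g (k - i - 1 + j))" for k
  have "walk R g1 (Suc (j - i))" "g1 0 = g1 (Suc (j - i))"
    using W sym[OF chord] \<open>i < j\<close> \<open>j < n\<close>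
    unfolding walk_def g1_def by (auto simp: less_Suc_eq)
  moreover have "walk R g2 (i + 1 + (n - j))"
    unfolding walk_def
  proof (intro allI impI)
    fix k assume k: "k < i + 1 + (n - j)"
    show "R (g2 k) (g2 (Suc k))"
    proof (cases k i rule: linorder_cases)
      case greater
      then have "Suc (k - i - 1 + j) = Suc k - i - 1 + j" by simp
      then show ?thesis using W[of "k - i - 1 + j"] k greater \<open>j < n\<close> unfolding g2_def by simp
    qed (use W \<open>i < j\<close> \<open>j < n\<close> chord in \<open>auto simp: g2_def\<close>)
  qed
  moreover have "g2 0 = g2 (i + 1 + (n - j))"
  proof -
    have "\<not> i + 1 + (n - j) \<le> i" "i + 1 + (n - j) - i - 1 + j = n" using \<open>j < n\<close> by auto
    then show ?thesis using \<open>g 0 = g n\<close> unfolding g2_def by simp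
  qed
  moreover have "odd (Suc (j - i)) \<or> odd (i + 1 + (n - j))" using \<open>odd n\<close> \<open>i < j\<close> \<open>j < n\<close> by auto
  moreover have "Suc (j - i) < n" "i + 1 + (n - j) < n" using not_edge \<open>i < j\<close> \<open>j < n\<close> by auto
  ultimately show False
    using w unfolding shortest_odd_closed_walk_def odd_closed_walk_def by blast
qed

text \<open>An odd hole is enumerated n-periodically by the integers, so that the indices of
  its vertices can be shifted freely.\<close>

definition odd_hole :: "'a set \<Rightarrow> ('a \<Rightarrow> 'a \<Rightarrow> bool) \<Rightarrow> (int \<Rightarrow> 'a) \<Rightarrow> int \<Rightarrow> bool" where
  "odd_hole S E f n \<longleftrightarrow> 5 \<le> n \<and> odd n \<and> (\<forall>i. f i \<in> S) \<and>
     (\<forall>i j. E (f i) (f j) \<longleftrightarrow> n dvd (i - j - 1) \<or> n dvd (i - j + 1)) \<and>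
     (\<forall>i j. f i = f j \<longleftrightarrow> n dvd (i - j))"

lemma odd_hole_mono: "odd_hole T E f n \<Longrightarrow> T \<subseteq> S \<Longrightarrow> odd_hole S E f n"
  unfolding odd_hole_def by blast

lemma shortest_odd_closed_walk_adj_iff:
  assumes sym: "\<And>x y. R x y \<Longrightarrow> R y x" and irr: "\<And>x. \<not> R x x"
    and w: "shortest_odd_closed_walk R g n" and "p < n" "q < n"
  shows "R (g p) (g q) \<longleftrightarrow> q = Suc p \<or> p = Suc q \<or> (p = 0 \<and> q = n - 1) \<or> (q = 0 \<and> p = n - 1)"
proof
  assume e: "R (g p) (g q)"
  consider "p < q" | "p = q" | "q < p" by linarith
  then show "q = Suc p \<or> p = Suc q \<or> (p = 0 \<and> q = n - 1) \<or> (q = 0 \<and> p = n - 1)"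
  proof cases
    case 1
    then show ?thesis using shortest_odd_closed_walk_chordless[OF sym w 1 \<open>q < n\<close> e] by auto
  next
    case 2
    then show ?thesis using e irr by simp
  next
    case 3
    then show ?thesis using shortest_odd_closed_walk_chordless[OF sym w 3 \<open>p < n\<close> sym[OF e]] by auto
  qed
next
  have W: "\<And>l. l < n \<Longrightarrow> R (g l) (g (Suc l))" and "g n = g 0" "odd n"
    using w unfolding shortest_odd_closed_walk_def odd_closed_walk_def walk_def by auto
  then have "n \<noteq> 0" by (metis odd_pos less_not_refl2)
  assume "q = Suc p \<or> p = Suc q \<or> (p = 0 \<and> q = n - 1) \<or> (q = 0 \<and> p = n - 1)"
  then show "R (g p) (g q)"
    using W[of p] W[of q] sym[OF W[of q]] sym[OF W[of p]] \<open>p < n\<close> \<open>q < n\<close> \<open>g n = g 0\<close> \<open>n \<noteq> 0\<close>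
    by (auto simp: Suc_diff_1)
qed

lemma int_dvd_iff_small:
  fixes n d :: int
  assumes "0 < n" "-n \<le> d" "d \<le> n"
  shows "n dvd d \<longleftrightarrow> d = -n \<or> d = 0 \<or> d = n"
proof
  assume "n dvd d"
  show "d = -n \<or> d = 0 \<or> d = n"
  proof (rule ccontr)
    assume "\<not> ?thesis"
    then have "d \<noteq> 0" "\<bar>d\<bar> < n" using assms by auto
    with dvd_imp_le_int[OF \<open>d \<noteq> 0\<close> \<open>n dvd d\<close>] show False by auto
  qed
qed auto

lemma cyclic_neighbours_iff_dvd:
  fixes n i j :: int
  assumes "0 < n"
  defines "p \<equiv> i mod n" and "q \<equiv> j mod n"
  shows "q = p + 1 \<or> p = q + 1 \<or> (p = 0 \<and> q = n - 1) \<or> (q = 0 \<and> p = n - 1)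
    \<longleftrightarrow> n dvd (i - j - 1) \<or> n dvd (i - j + 1)"
proof -
  have pq: "0 \<le> p" "p < n" "0 \<le> q" "q < n" using assms by (auto simp: p_def q_def)
  have "n dvd (i - j + c) \<longleftrightarrow> n dvd (p - q + c)" for c
  proof -
    have "i - j + c = (p - q + c) + n * (i div n - j div n)"
      by (simp add: p_def q_def algebra_simps)
    then show ?thesis by (metis dvd_add_left_iff dvd_triv_left)
  qed
  from this[of "-1"] this[of 1]
  have "n dvd (i - j - 1) \<longleftrightarrow> n dvd (p - q - 1)" "n dvd (i - j + 1) \<longleftrightarrow> n dvd (p - q + 1)"
    by simp_all
  moreover have "n dvd (p - q - 1) \<longleftrightarrow> p - q - 1 = -n \<or> p - q - 1 = 0 \<or> p - q - 1 = n"
    "n dvd (p - q + 1) \<longleftrightarrow> p - q + 1 = -n \<or> p - q + 1 = 0 \<or> p - q + 1 = n"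
    using pq by (simp_all add: int_dvd_iff_small \<open>0 < n\<close>)
  ultimately show ?thesis using pq by (smt (verit))
qed

lemma odd_hole_if_shortest_odd_closed_walk:
  assumes sym: "\<And>x y. E x y \<Longrightarrow> E y x" and irr: "\<And>x. \<not> E x x"
    and w: "shortest_odd_closed_walk (induced E T) g n" and "5 \<le> n"
  shows "odd_hole T E (\<lambda>i. g (nat (i mod int n))) (int n)"
proof -
  let ?R = "induced E T"
  let ?f = "\<lambda>i. g (nat (i mod int n))"
  have adj_iff: "?R (g p) (g q) \<longleftrightarrow>
      q = Suc p \<or> p = Suc q \<or> (p = 0 \<and> q = n - 1) \<or> (q = 0 \<and> p = n - 1)"
    if "p < n" "q < n" for p q
    by (rule shortest_odd_closed_walk_adj_iff[OF _ _ w that]) (use sym irr in \<open>auto simp: induced_def\<close>)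
  have gT: "g l \<in> T" if "l < n" for l
    using w that unfolding shortest_odd_closed_walk_def odd_closed_walk_def walk_def induced_def by auto
  have n0: "0 < int n" using \<open>5 \<le> n\<close> by simp
  have range: "nat (i mod int n) < n" for i using n0 by (simp add: nat_less_iff)
  have "E (?f i) (?f j) \<longleftrightarrow> int n dvd (i - j - 1) \<or> int n dvd (i - j + 1)" for i j
  proof -
    have "E (?f i) (?f j) \<longleftrightarrow> ?R (?f i) (?f j)" using gT range by (auto simp: induced_def)
    also have "\<dots> \<longleftrightarrow> int n dvd (i - j - 1) \<or> int n dvd (i - j + 1)"
      unfolding adj_iff[OF range range] cyclic_neighbours_iff_dvd[OF n0, symmetric]
      using n0 by (auto simp: nat_eq_iff)
    finally show ?thesis .
  qed
  moreover have "?f i = ?f j \<longleftrightarrow> int n dvd (i - j)" for i j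
  proof -
    have "?f i = ?f j \<longleftrightarrow> nat (i mod int n) = nat (j mod int n)"
      using shortest_odd_closed_walk_distinct[OF w] range
      by (metis linorder_neqE_nat)
    also have "\<dots> \<longleftrightarrow> i mod int n = j mod int n" using n0 by (simp add: eq_nat_nat_iff)
    also have "\<dots> \<longleftrightarrow> int n dvd (i - j)" by (rule mod_eq_dvd_iff)
    finally show ?thesis .
  qed
  moreover have "odd n" using w by (simp add: shortest_odd_closed_walk_def odd_closed_walk_def)
  ultimately show ?thesis using \<open>5 \<le> n\<close> gT range unfolding odd_hole_def by simp
qed

section \<open>Paw-free graphs with a triangle\<close>

definition paw_free :: "'a set \<Rightarrow> ('a \<Rightarrow> 'a \<Rightarrow> bool) \<Rightarrow> bool" where
  "paw_free S E \<longleftrightarrow> \<not> (\<exists>a\<in>S. \<exists>b\<in>S. \<exists>c\<in>S. \<exists>d\<in>S.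
     E a b \<and> E b c \<and> E a c \<and> E c d \<and> \<not> E a d \<and> \<not> E b d)"

text \<open>The parts are the classes of non-adjacency.\<close>

definition complete_multipartite :: "'a set \<Rightarrow> ('a \<Rightarrow> 'a \<Rightarrow> bool) \<Rightarrow> bool" where
  "complete_multipartite X E \<longleftrightarrow> (\<forall>a\<in>X. \<forall>b\<in>X. \<forall>c\<in>X.
     a \<noteq> b \<longrightarrow> b \<noteq> c \<longrightarrow> a \<noteq> c \<longrightarrow> \<not> E a b \<longrightarrow> \<not> E b c \<longrightarrow> \<not> E a c)"

lemma complete_multipartiteD:
  "complete_multipartite X E \<Longrightarrow> a \<in> X \<Longrightarrow> b \<in> X \<Longrightarrow> c \<in> X \<Longrightarrow> a \<noteq> b \<Longrightarrow> b \<noteq> c \<Longrightarrow> a \<noteq> c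
    \<Longrightarrow> \<not> E a b \<Longrightarrow> \<not> E b c \<Longrightarrow> \<not> E a c"
  unfolding complete_multipartite_def by blast

lemma complete_multipartite_edge_dominates:
  assumes sym: "\<And>x y. E x y \<Longrightarrow> E y x" and irr: "\<And>x. \<not> E x x"
    and "complete_multipartite X E" "s \<in> X" "t \<in> X" "p \<in> X" "E s t"
  shows "E s p \<or> E t p"
proof (rule ccontr)
  assume "\<not> (E s p \<or> E t p)"
  moreover have "s \<noteq> t" using \<open>E s t\<close> irr by auto
  ultimately show False
    using complete_multipartiteD[OF assms(3), of s p t] assms(4-7) sym by auto
qed

lemma rtranclp_leaves_set:
  assumes "R\<^sup>*\<^sup>* p q" "p \<in> X" "q \<notin> X"
  shows "\<exists>s t. R s t \<and> s \<in> X \<and> t \<notin> X"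
  using assms by (induction rule: rtranclp_induct) auto

locale paw_free_triangle =
  fixes S :: "'a set" and E :: "'a \<Rightarrow> 'a \<Rightarrow> bool" and X :: "'a set" and a b c :: 'a
  assumes sym: "\<And>x y. E x y \<Longrightarrow> E y x" and irr: "\<And>x. \<not> E x x"
    and paw_free: "paw_free S E" and X_subset: "X \<subseteq> S" and multipartite: "complete_multipartite X E"
    and triangle: "a \<in> X" "b \<in> X" "c \<in> X" "E a b" "E b c" "E a c"
begin

lemma no_paw:
  "p \<in> S \<Longrightarrow> q \<in> S \<Longrightarrow> r \<in> S \<Longrightarrow> s \<in> S \<Longrightarrow> E p q \<Longrightarrow> E q r \<Longrightarrow> E p r \<Longrightarrow> E r s
    \<Longrightarrow> \<not> E p s \<Longrightarrow> \<not> E q s \<Longrightarrow> False"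
  using paw_free unfolding paw_free_def by blast

lemmas edge_dominates = complete_multipartite_edge_dominates[OF sym irr multipartite]

lemma edge_common_neighbour:
  assumes "p \<in> X" "q \<in> X" "E p q"
  shows "\<exists>z\<in>X. E z p \<and> E z q"
proof (rule ccontr)
  assume "\<not> ?thesis"
  then have "\<not> E a p \<or> \<not> E a q" "\<not> E b p \<or> \<not> E b q" "\<not> E c p \<or> \<not> E c q" using triangle by auto
  then show False
    using edge_dominates[of a b p] edge_dominates[of a c p] edge_dominates[of b c p]
      edge_dominates[of a b q] edge_dominates[of a c q] edge_dominates[of b c q] triangle assms
    by blast
qed

lemma non_edge_common_neighbour_edge:
  assumes "p \<in> X" "q \<in> X" "p \<noteq> q" "\<not> E p q"
  shows "\<exists>w1\<in>X. \<exists>w2\<in>X. E w1 w2 \<and> E w1 p \<and> E w1 q \<and> E w2 p \<and> E w2 q"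
proof -
  have same_part: "t = p \<or> \<not> E t p" if t: "t \<in> X" "\<not> (E t p \<and> E t q)" for t
  proof (cases "t = p \<or> t = q")
    case True
    then show ?thesis using t assms sym by blast
  next
    case False
    then show ?thesis using complete_multipartiteD[OF multipartite, of t q p] t assms sym by blast
  qed
  have no_edge: False if "s \<in> X" "t \<in> X" "E s t" "s = p \<or> \<not> E s p" "t = p \<or> \<not> E t p" for s t
    using edge_dominates[of s t p] that \<open>p \<in> X\<close> sym irr by blast
  show ?thesis
  proof (rule ccontr)
    assume "\<not> ?thesis"
    then have "\<not> (E a p \<and> E a q) \<or> \<not> (E b p \<and> E b q)" "\<not> (E a p \<and> E a q) \<or> \<not> (E c p \<and> E c q)"
      "\<not> (E b p \<and> E b q) \<or> \<not> (E c p \<and> E c q)"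
      using triangle by blast+
    then show False
      using same_part[of a] same_part[of b] same_part[of c]
        no_edge[of a b] no_edge[of a c] no_edge[of b c] triangle by blast
  qed
qed

context
  fixes x y :: 'a
  assumes y: "y \<in> S" "y \<notin> X" and x: "x \<in> X" "E x y"
begin

lemma non_neighbours_independent:
  assumes pq: "p \<in> X" "q \<in> X" "\<not> E y p" "\<not> E y q"
  shows "\<not> E p q"
proof
  assume "E p q"
  obtain z where z: "z \<in> X" "E z p" "E z q" using edge_common_neighbour[OF pq(1,2) \<open>E p q\<close>] by blast
  have "\<not> E y z"
    using no_paw[of p q z y] X_subset pq \<open>E p q\<close> z y sym by blast
  moreover have "(E x p \<and> E x q) \<or> (E x p \<and> E x z) \<or> (E x q \<and> E x z)"
    using edge_dominates[of p q x] edge_dominates[of z p x] edge_dominates[of z q x]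
      pq \<open>E p q\<close> z x sym by blast
  ultimately show False
  proof (elim disjE)
    assume "E x p \<and> E x q"
    then show False using no_paw[of p q x y] X_subset pq \<open>E p q\<close> x y sym by blast
  next
    assume "E x p \<and> E x z"
    then show False using no_paw[of p z x y] X_subset pq z x y sym \<open>\<not> E y z\<close> by blast
  next
    assume "E x q \<and> E x z"
    then show False using no_paw[of q z x y] X_subset pq z x y sym \<open>\<not> E y z\<close> by blast
  qed
qed

lemma non_neighbour_part:
  assumes pq: "p \<in> X" "q \<in> X" "p \<noteq> q" "\<not> E p q" "\<not> E y p"
  shows "\<not> E y q"
proof
  assume "E y q"
  obtain w1 w2 where w: "w1 \<in> X" "w2 \<in> X" "E w1 w2" "E w1 p" "E w1 q" "E w2 p" "E w2 q"
    using non_edge_common_neighbour_edge[OF pq(1-4)] by blast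
  have "\<not> E y w1" "\<not> E y w2"
    using no_paw[of y q w1 p] no_paw[of y q w2 p] X_subset pq w \<open>E y q\<close> y sym by blast+
  then show False using non_neighbours_independent[OF w(1,2)] w(3) by simp
qed

lemma complete_multipartite_insert: "complete_multipartite (insert y X) E"
  unfolding complete_multipartite_def
proof (intro ballI impI)
  fix p q r assume "p \<in> insert y X" "q \<in> insert y X" "r \<in> insert y X"
    and d: "p \<noteq> q" "q \<noteq> r" "p \<noteq> r" and n: "\<not> E p q" "\<not> E q r"
  then consider "p = y" "q \<in> X" "r \<in> X" | "q = y" "p \<in> X" "r \<in> X" | "r = y" "p \<in> X" "q \<in> X"
    | "p \<in> X" "q \<in> X" "r \<in> X"
    by auto
  then show "\<not> E p r"
  proof cases
    case 1
    then show ?thesis using non_neighbour_part[of q r] n d by auto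
  next
    case 2
    then show ?thesis using non_neighbours_independent[of p r] n sym by auto
  next
    case 3
    then show ?thesis using non_neighbour_part[of q p] n d sym by auto
  next
    case 4
    then show ?thesis using complete_multipartiteD[OF multipartite] d n by blast
  qed
qed

end

end

text \<open>Olariu's theorem. A maximal complete multipartite set containing the triangle absorbs
  the far end of any edge leaving it, so by connectivity it is everything.\<close>

lemma connected_paw_free_complete_multipartite:
  assumes sym: "\<And>x y. E x y \<Longrightarrow> E y x" and irr: "\<And>x. \<not> E x x"
    and "paw_free S E" "T \<subseteq> S" "finite T"
    and conn: "\<forall>x\<in>T. \<forall>y\<in>T. (induced E T)\<^sup>*\<^sup>* x y"
    and triangle: "a \<in> T" "b \<in> T" "c \<in> T" "E a b" "E b c" "E a c"
  shows "complete_multipartite T E"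
proof -
  define F where "F = {X. X \<subseteq> T \<and> {a, b, c} \<subseteq> X \<and> complete_multipartite X E}"
  have "complete_multipartite {a, b, c} E"
    unfolding complete_multipartite_def using triangle sym by auto
  then have "{a, b, c} \<in> F" using triangle by (auto simp: F_def)
  moreover have "finite F" by (rule finite_subset[of _ "Pow T"]) (auto simp: F_def \<open>finite T\<close>)
  ultimately obtain X where X_in: "X \<in> F" and maximal: "\<forall>Y\<in>F. X \<subseteq> Y \<longrightarrow> X = Y"
    using finite_has_maximal[of F] by blast
  have X: "X \<subseteq> T" "{a, b, c} \<subseteq> X" "complete_multipartite X E" using X_in by (auto simp: F_def)
  show ?thesis
  proof (cases "X = T")
    case True
    then show ?thesis using X by simp
  next
    case False
    then obtain q where q: "q \<in> T" "q \<notin> X" using X by blast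
    obtain s t where st: "induced E T s t" "s \<in> X" "t \<notin> X"
      using rtranclp_leaves_set[OF conn[rule_format, OF triangle(1) q(1)] _ q(2)] X by blast
    have "t \<in> T" using st by (auto simp: induced_def)
    interpret paw_free_triangle S E X a b c
      using sym irr assms(3,4) X triangle by unfold_locales auto
    have "complete_multipartite (insert t X) E"
      using complete_multipartite_insert[where x = s and y = t] \<open>t \<in> T\<close> \<open>T \<subseteq> S\<close> st by (auto simp: induced_def)
    then have "insert t X \<in> F" using X \<open>t \<in> T\<close> by (auto simp: F_def)
    then show ?thesis using maximal st by blast
  qed
qed

section \<open>Paw-free graphs without odd holes are perfect\<close>

lemma clique_colourable_complete_multipartite:
  assumes sym: "\<And>x y. E x y \<Longrightarrow> E y x" and irr: "\<And>x. \<not> E x x"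
    and "finite T" "x \<in> T" "complete_multipartite T E"
    and "clique_colourable (T - {y \<in> T. y = x \<or> \<not> E x y}) (induced E (T - {y \<in> T. y = x \<or> \<not> E x y}))"
  shows "clique_colourable T (induced E T)"
proof (rule clique_colourable_add_class[OF \<open>finite T\<close> \<open>x \<in> T\<close> refl _ sym assms(6)])
  fix y z assume y: "y \<in> {y \<in> T. y = x \<or> \<not> E x y}" and z: "z \<in> {y \<in> T. y = x \<or> \<not> E x y}"
  show "\<not> E y z"
  proof (cases "y = z \<or> y = x \<or> z = x")
    case True
    then show ?thesis using y z irr sym by auto
  next
    case False
    then have "\<not> E y x" "\<not> E x z" using y z sym by auto
    then show ?thesis using complete_multipartiteD[OF assms(5), of y x z] y z False \<open>x \<in> T\<close> by blast
  qed
qed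

lemma odd_hole_if_triangle_free:
  assumes sym: "\<And>x y. E x y \<Longrightarrow> E y x" and irr: "\<And>x. \<not> E x x"
    and no_triangle: "\<not> (\<exists>a\<in>T. \<exists>b\<in>T. \<exists>c\<in>T. E a b \<and> E b c \<and> E a c)"
    and "odd_closed_walk (induced E T) g n"
  shows "\<exists>f m. odd_hole T E f m"
proof -
  let ?R = "induced E T"
  obtain g n where w: "shortest_odd_closed_walk ?R g n"
    using shortest_odd_closed_walk_exists assms(4) by blast
  then have W: "\<And>l. l < n \<Longrightarrow> ?R (g l) (g (Suc l))" and "g n = g 0" "odd n"
    unfolding shortest_odd_closed_walk_def odd_closed_walk_def walk_def by auto
  have "n \<noteq> 1"
  proof
    assume "n = 1"
    then have "?R (g 0) (g 0)" using W[of 0] \<open>g n = g 0\<close> by simp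
    then show False using irr by (simp add: induced_def)
  qed
  moreover have "n \<noteq> 3"
  proof
    assume "n = 3"
    then have "?R (g 0) (g 1)" "?R (g 1) (g 2)" "?R (g 2) (g 0)"
      using W[of 0] W[of 1] W[of 2] \<open>g n = g 0\<close> by (simp_all add: numeral_3_eq_3 numeral_2_eq_2)
    then have "g 0 \<in> T" "g 1 \<in> T" "g 2 \<in> T" "E (g 0) (g 1)" "E (g 1) (g 2)" "E (g 0) (g 2)"
      using sym[of "g 2" "g 0"] by (simp_all add: induced_def)
    then show False using no_triangle by blast
  qed
  ultimately have "5 \<le> n" using \<open>odd n\<close> by presburger
  then show ?thesis using odd_hole_if_shortest_odd_closed_walk[OF sym irr w] by blast
qed

lemma clique_colourable_bipartite:
  assumes sym: "\<And>x y. E x y \<Longrightarrow> E y x" and irr: "\<And>x. \<not> E x x"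
    and "x \<in> T" and conn: "\<forall>y\<in>T. (induced E T)\<^sup>*\<^sup>* x y"
    and no_odd: "\<And>g n. \<not> odd_closed_walk (induced E T) g n"
  shows "clique_colourable T (induced E T)"
proof (cases "T = {x}")
  case True
  have "proper_colouring T (induced E T) 1 (\<lambda>_. 0)" "clique T (induced E T) {x}"
    using True irr by (auto simp: proper_colouring_def clique_def induced_def)
  then show ?thesis unfolding clique_colourable_def by fastforce
next
  case False
  then obtain y where "y \<in> T" "y \<noteq> x" using \<open>x \<in> T\<close> by blast
  then obtain z where z: "induced E T x z"
    using conn by (metis converse_rtranclpE)
  have "x \<noteq> z" using z irr by (auto simp: induced_def)
  have "induced E T x y \<Longrightarrow> induced E T y x" for x y using sym by (auto simp: induced_def)
  then obtain c where "proper_colouring T (induced E T) 2 c"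
    using two_colouring_if_no_odd_closed_walk[OF _ conn no_odd] by blast
  moreover have "clique T (induced E T) {x, z}" using z sym by (auto simp: clique_def induced_def)
  moreover have "card {x, z} = 2" using \<open>x \<noteq> z\<close> by simp
  ultimately show ?thesis unfolding clique_colourable_def by blast
qed

lemma clique_colourable_disconnected:
  assumes sym: "\<And>x y. E x y \<Longrightarrow> E y x"
    and "x \<in> T" "\<not> (\<forall>y\<in>T. (induced E T)\<^sup>*\<^sup>* x y)"
    and IH: "\<And>T'. T' \<subset> T \<Longrightarrow> clique_colourable T' (induced E T')"
  shows "clique_colourable T (induced E T)"
proof -
  let ?R = "induced E T"
  define K where "K = {z \<in> T. ?R\<^sup>*\<^sup>* x z}"
  have "K \<subset> T" "T - K \<subset> T" using assms(2,3) by (auto simp: K_def)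
  moreover have "\<not> E z w" if "z \<in> K" "w \<in> T - K" for z w
  proof
    assume "E z w"
    then have "?R z w" using that by (auto simp: K_def induced_def)
    then have "?R\<^sup>*\<^sup>* x w" using that(1) by (auto simp: K_def)
    then show False using that(2) by (auto simp: K_def)
  qed
  ultimately have "clique_colourable (K \<union> (T - K)) (induced E (K \<union> (T - K)))"
    using IH sym by (intro clique_colourable_Un) blast+
  moreover have "K \<union> (T - K) = T" by (auto simp: K_def)
  ultimately show ?thesis by simp
qed

lemma clique_colourable_connected:
  assumes sym: "\<And>x y. E x y \<Longrightarrow> E y x" and irr: "\<And>x. \<not> E x x"
    and "paw_free S E" and no_hole: "\<And>f n. \<not> odd_hole S E f n"
    and "finite T" "T \<subseteq> S" "x \<in> T" and reach: "\<forall>y\<in>T. (induced E T)\<^sup>*\<^sup>* x y"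
    and IH: "\<And>T'. T' \<subset> T \<Longrightarrow> clique_colourable T' (induced E T')"
  shows "clique_colourable T (induced E T)"
proof (cases "\<exists>a\<in>T. \<exists>b\<in>T. \<exists>c\<in>T. E a b \<and> E b c \<and> E a c")
  case True
  let ?R = "induced E T"
  have "symp ?R" using sym by (auto simp: symp_def induced_def)
  then have "?R\<^sup>*\<^sup>* a b" if "a \<in> T" "b \<in> T" for a b
    using sympD[OF symp_rtranclp] reach that by (metis rtranclp_trans)
  moreover obtain a b c where "a \<in> T" "b \<in> T" "c \<in> T" "E a b" "E b c" "E a c" using True by blast
  ultimately have "complete_multipartite T E"
    using connected_paw_free_complete_multipartite[of E S T a b c] sym irr assms(3,5,6) by blast
  moreover have "T - {y \<in> T. y = x \<or> \<not> E x y} \<subset> T" using \<open>x \<in> T\<close> by blast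
  then have "clique_colourable (T - {y \<in> T. y = x \<or> \<not> E x y}) (induced E (T - {y \<in> T. y = x \<or> \<not> E x y}))"
    by (rule IH)
  ultimately show ?thesis
    using clique_colourable_complete_multipartite[of E T x] sym irr \<open>finite T\<close> \<open>x \<in> T\<close> by blast
next
  case False
  have "\<not> odd_closed_walk (induced E T) g n" for g n
  proof
    assume "odd_closed_walk (induced E T) g n"
    then obtain f m where "odd_hole T E f m" using odd_hole_if_triangle_free[of E T] sym irr False by blast
    then show False using odd_hole_mono[OF _ \<open>T \<subseteq> S\<close>] no_hole by blast
  qed
  then show ?thesis using clique_colourable_bipartite[of E x T] sym irr \<open>x \<in> T\<close> reach by blast
qed

lemma paw_free_no_odd_hole_clique_colourable:
  assumes sym: "\<And>x y. E x y \<Longrightarrow> E y x" and irr: "\<And>x. \<not> E x x"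
    and paw_free: "paw_free S E" and no_hole: "\<And>f n. \<not> odd_hole S E f n"
    and "finite T" "T \<subseteq> S"
  shows "clique_colourable T (induced E T)"
  using assms(5,6)
proof (induction "card T" arbitrary: T rule: less_induct)
  case less
  have IH: "clique_colourable T' (induced E T')" if "T' \<subset> T" for T'
  proof -
    have "card T' < card T" using psubset_card_mono[OF less.prems(1) that] .
    moreover have "finite T'" "T' \<subseteq> S" using that less.prems finite_subset by auto
    ultimately show ?thesis using less.hyps by blast
  qed
  show ?case
  proof (cases "T = {}")
    case False
    then obtain x where "x \<in> T" by blast
    then show ?thesis
      using clique_colourable_disconnected[of E x T] clique_colourable_connected[of E S T x]
        sym irr paw_free no_hole less.prems IH by blast
  qed (simp add: clique_colourable_empty)
qed

lemma perfect_if_paw_free_no_odd_hole: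
  assumes sym: "\<And>x y. E x y \<Longrightarrow> E y x" and irr: "\<And>x. \<not> E x x"
    and "finite S" "paw_free S E" "\<And>f n. \<not> odd_hole S E f n"
  shows "perfect S (induced E S)"
  unfolding perfect_def
proof (intro allI impI)
  fix T assume "T \<subseteq> S"
  then have "finite T" "induced (induced E S) T = induced E T"
    using \<open>finite S\<close> finite_subset by (auto simp: induced_def fun_eq_iff)
  moreover have "clique_colourable T (induced E T)"
    using paw_free_no_odd_hole_clique_colourable[of E S T] assms \<open>finite T\<close> \<open>T \<subseteq> S\<close> by blast
  ultimately show "chromatic_number T (induced (induced E S) T) = clique_number T (induced (induced E S) T)"
    using chromatic_number_eq_clique_number by simp
qed

section \<open>An odd hole among the non-neighbours of a vertex\<close>

text \<open>A paw in M(v) together with v forms a co-dart.\<close>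

lemma paw_free_nonnbrs:
  assumes "graph V E" "\<not> has_induced V E codart_V codart_E" "v \<in> V"
  shows "paw_free (nonnbrs V E v) E"
  unfolding paw_free_def
proof (intro notI, elim bexE conjE)
  fix a b c d assume M: "a \<in> nonnbrs V E v" "b \<in> nonnbrs V E v" "c \<in> nonnbrs V E v" "d \<in> nonnbrs V E v"
    and paw: "E a b" "E b c" "E a c" "E c d" "\<not> E a d" "\<not> E b d"
  have sym: "\<And>x y. E x y \<Longrightarrow> E y x" and irr: "\<And>x. \<not> E x x" using assms(1) by (auto simp: graph_def)
  have "x \<in> V \<and> \<not> E v x \<and> \<not> E x v" if "x \<in> nonnbrs V E v" for x
    using that sym by (auto simp: nonnbrs_def)
  then have "has_induced V E codart_V codart_E"
    using has_induced_codartI[of c V a b d v E, OF _ _ _ _ \<open>v \<in> V\<close> sym irr] M paw sym by blast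
  with assms(2) show False by blast
qed

locale odd_hole_in_nonnbrs =
  fixes V :: "'a set" and E :: "'a \<Rightarrow> 'a \<Rightarrow> bool" and v :: 'a and f :: "int \<Rightarrow> 'a" and n :: int
  assumes graph: "graph V E"
    and fork_free: "\<not> has_induced V E fork_V fork_E"
    and codart_free: "\<not> has_induced V E codart_V codart_E"
    and v_in_V: "v \<in> V"
    and hole: "odd_hole (nonnbrs V E v) E f n"
begin

lemma sym: "E x y \<Longrightarrow> E y x" and irr: "\<not> E x x"
  and edge_in_V: "E x y \<Longrightarrow> x \<in> V" "E x y \<Longrightarrow> y \<in> V"
  using graph by (auto simp: graph_def)

lemma nonnbrsD: "x \<in> nonnbrs V E v \<Longrightarrow> x \<in> V \<and> x \<noteq> v \<and> \<not> E v x \<and> \<not> E x v"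
  using sym by (auto simp: nonnbrs_def)

lemma hole_length: "5 \<le> n" and odd_length: "odd n"
  using hole by (auto simp: odd_hole_def)

lemma hole_in_nonnbrs: "f i \<in> nonnbrs V E v"
  using hole by (auto simp: odd_hole_def)

lemma hole_in_V: "f i \<in> V" and hole_not_adj_v: "\<not> E v (f i)" "\<not> E (f i) v" "f i \<noteq> v"
  using nonnbrsD[OF hole_in_nonnbrs] by auto

lemma hole_adj_iff: "E (f i) (f j) \<longleftrightarrow> n dvd (i - j - 1) \<or> n dvd (i - j + 1)"
  using hole by (auto simp: odd_hole_def)

lemma hole_eq_iff: "f i = f j \<longleftrightarrow> n dvd (i - j)"
  using hole by (auto simp: odd_hole_def)

lemma not_dvd_small: "k \<noteq> 0 \<Longrightarrow> \<bar>k\<bar> < n \<Longrightarrow> \<not> n dvd k"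
  using dvd_imp_le_int[of k n] hole_length by auto

lemma not_dvd_le_4:
  "\<not> n dvd 1" "\<not> n dvd -1" "\<not> n dvd 2" "\<not> n dvd -2" "\<not> n dvd 3" "\<not> n dvd -3" "\<not> n dvd 4" "\<not> n dvd -4"
  using not_dvd_small[of 1] not_dvd_small[of "-1"] not_dvd_small[of 2] not_dvd_small[of "-2"]
    not_dvd_small[of 3] not_dvd_small[of "-3"] not_dvd_small[of 4] not_dvd_small[of "-4"] hole_length
  by auto

lemma hole_edge: "E (f i) (f (i + 1))" "E (f (i + 1)) (f i)" "E (f i) (f (i - 1))" "E (f (i - 1)) (f i)"
  by (simp_all add: hole_adj_iff)

lemma no_fork:
  assumes "a0 \<in> V" "a1 \<in> V" "a2 \<in> V" "a3 \<in> V" "a4 \<in> V"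
    and "E a0 a1" "E a0 a2" "E a0 a3" "E a3 a4"
    and "\<not> E a1 a2" "\<not> E a1 a3" "\<not> E a1 a4" "\<not> E a2 a3" "\<not> E a2 a4" "\<not> E a0 a4"
    and "a1 \<noteq> a2"
  shows False
  using has_induced_forkI[OF assms(1-5) sym irr assms(6-16)] fork_free by blast

lemma no_codart:
  assumes "a0 \<in> V" "a1 \<in> V" "a2 \<in> V" "a3 \<in> V" "a4 \<in> V"
    and "E a0 a1" "E a1 a2" "E a0 a2" "E a0 a3"
    and "\<not> E a1 a3" "\<not> E a2 a3" "\<not> E a0 a4" "\<not> E a1 a4" "\<not> E a2 a4" "\<not> E a3 a4"
  shows False
  using has_induced_codartI[OF assms(1-5) sym irr assms(6-15)] codart_free by blast

lemma no_paw_in_nonnbrs: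
  assumes "a \<in> nonnbrs V E v" "b \<in> nonnbrs V E v" "c \<in> nonnbrs V E v" "d \<in> nonnbrs V E v"
    and "E a b" "E b c" "E a c" "E c d" "\<not> E a d" "\<not> E b d"
  shows False
  using paw_free_nonnbrs[OF graph codart_free v_in_V] assms unfolding paw_free_def by blast

text \<open>If w in M(v) saw two consecutive hole vertices, paw-freeness of M(v) would force w to
  see the next one, hence the whole hole; but then w, f 0, f 1, f 3 form a paw.\<close>

lemma nonnbr_not_adj_consecutive:
  assumes w: "w \<in> nonnbrs V E v" and "E w (f i)"
  shows "\<not> E w (f (i + 1))"
proof
  assume "E w (f (i + 1))"
  have step: "E w (f (i + int k)) \<and> E w (f (i + int k + 1))" for k
  proof (induction k)
    case 0
    then show ?case using \<open>E w (f i)\<close> \<open>E w (f (i + 1))\<close> by simp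
  next
    case (Suc k)
    have "E w (f (i + int k + 2))"
    proof (rule ccontr)
      assume "\<not> E w (f (i + int k + 2))"
      then show False
        using no_paw_in_nonnbrs[of w "f (i + int k)" "f (i + int k + 1)" "f (i + int k + 2)"]
          w hole_in_nonnbrs Suc.IH sym hole_length by (auto simp: hole_adj_iff not_dvd_le_4)
    qed
    then show ?case using Suc.IH by (simp add: algebra_simps)
  qed
  have "E w (f j)" for j
  proof -
    have "j - (i + (j - i) mod n) = n * ((j - i) div n)"
      by (simp add: minus_mod_eq_mult_div [symmetric])
    then have "f j = f (i + int (nat ((j - i) mod n)))"
      using hole_length by (simp add: hole_eq_iff)
    then show ?thesis using step[of "nat ((j - i) mod n)"] by metis
  qed
  then show False
    using no_paw_in_nonnbrs[of "f 0" "f 1" w "f 3"] w hole_in_nonnbrs sym hole_length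
    by (auto simp: hole_adj_iff not_dvd_le_4)
qed

lemma nonnbr_not_adj_consecutive':
  "w \<in> nonnbrs V E v \<Longrightarrow> E w (f i) \<Longrightarrow> \<not> E w (f (i - 1))"
  using nonnbr_not_adj_consecutive[of w "i - 1"] by auto

text \<open>Otherwise f i would be the centre of a fork with leaves f (i - 1), f (i + 1) and x,
  the last edge x v.\<close>

lemma nbr_adj_consecutive:
  assumes "E x v" "E x (f i)"
  shows "E x (f (i - 1)) \<or> E x (f (i + 1))"
proof (rule ccontr)
  assume "\<not> (E x (f (i - 1)) \<or> E x (f (i + 1)))"
  then have "\<not> E x (f (i - 1))" "\<not> E x (f (i + 1))" by auto
  have "f (i - 1) \<noteq> f (i + 1)" using not_dvd_le_4 hole_length by (simp add: hole_eq_iff)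
  show False
    by (rule no_fork[of "f i" "f (i - 1)" "f (i + 1)" x v])
      (use hole_in_V edge_in_V assms v_in_V hole_not_adj_v sym hole_length
        \<open>\<not> E x (f (i - 1))\<close> \<open>\<not> E x (f (i + 1))\<close> \<open>f (i - 1) \<noteq> f (i + 1)\<close>
        in \<open>auto simp: hole_adj_iff not_dvd_le_4 hole_edge\<close>)
qed

text \<open>The triangle x, f a, f (a + 1) with pendant v and a hole vertex f m seeing none of them
  would be a co-dart.\<close>

lemma nbr_adj_edge_near:
  assumes "E x v" "E x (f a)" "E x (f (a + 1))" "\<not> E x (f m)"
  shows "n dvd (m - a + 1) \<or> n dvd (m - a) \<or> n dvd (m - a - 1) \<or> n dvd (m - a - 2)"
proof (rule ccontr)
  assume far: "\<not> ?thesis"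
  have "a - m - 1 = -(m - a + 1)" "a - m + 1 = -(m - a - 1)"
    "a + 1 - m - 1 = -(m - a)" "a + 1 - m + 1 = -(m - a - 2)" by simp_all
  then have "\<not> E (f a) (f m)" "\<not> E (f (a + 1)) (f m)"
    unfolding hole_adj_iff dvd_minus_iff using far by (metis dvd_minus_iff)+
  then show False
    using no_codart[of x "f a" "f (a + 1)" v "f m"] hole_in_V edge_in_V assms v_in_V
      hole_not_adj_v sym
    by (auto simp: hole_edge)
qed

lemma nbr_adj_edge_far:
  assumes "E x v" "E x (f b)" "E x (f (b + 1))"
    and "\<not> n dvd (d + 1)" "\<not> n dvd d" "\<not> n dvd (d - 1)" "\<not> n dvd (d - 2)"
  shows "E x (f (b + d))"
  using nbr_adj_edge_near[OF assms(1-3), of "b + d"] assms(4-7) by auto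

lemma nbr_adj_edge_far_contra:
  assumes "E x v" "E x (f b)" "E x (f c)" "c = b + 1" "\<not> E x (f m)"
    and "\<not> n dvd (m - b + 1)" "\<not> n dvd (m - b)" "\<not> n dvd (m - b - 1)" "\<not> n dvd (m - b - 2)"
  shows False
  using nbr_adj_edge_near[OF assms(1,2) _ assms(5)] assms(3,4,6-9) by auto

lemma nbr_adj_edge_misses:
  assumes "E x v" "E x (f a)" "E x (f (a + 1))" "\<not> E x (f j)"
  shows "f j = f (a - 1) \<or> f j = f (a + 2)"
proof -
  have "n dvd (j - a + 1) \<or> n dvd (j - a) \<or> n dvd (j - a - 1) \<or> n dvd (j - a - 2)"
    using nbr_adj_edge_near[OF assms] .
  moreover have "\<not> n dvd (j - a)" using assms(2,4) by (auto simp: hole_eq_iff[of j a, symmetric])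
  moreover have "\<not> n dvd (j - a - 1)" using assms(3,4) hole_eq_iff[of j "a + 1"] by (auto simp: algebra_simps)
  ultimately have "n dvd (j - (a - 1)) \<or> n dvd (j - (a + 2))" by (auto simp: algebra_simps)
  then show ?thesis by (auto simp: hole_eq_iff)
qed

text \<open>x sees some edge f a, f (a + 1) of the hole and misses at most f (a - 1) or f (a + 2);
  applying the same to shifted edges that x sees rules out both.\<close>

lemma nbr_adj_hole_complete:
  assumes x: "E x v" "E x (f i)"
  shows "E x (f j)"
proof (rule ccontr)
  assume "\<not> E x (f j)"
  obtain a where a: "E x (f a)" "E x (f (a + 1))"
    using nbr_adj_consecutive[OF x] x(2) by (metis diff_add_cancel)
  have missing: "\<not> E x (f (a - 1)) \<or> \<not> E x (f (a + 2))"
    using nbr_adj_edge_misses[OF x(1) a \<open>\<not> E x (f j)\<close>] \<open>\<not> E x (f j)\<close> by auto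
  have a3: "E x (f (a + 3))" using nbr_adj_edge_far[OF x(1) a, of 3] not_dvd_le_4 by simp
  have "n = 5 \<or> 7 \<le> n" using hole_length odd_length by presburger
  then show False
  proof
    assume "7 \<le> n"
    then have far: "\<not> n dvd 5" "\<not> n dvd -5" "\<not> n dvd 6" "\<not> n dvd -6"
      using not_dvd_small[of 5] not_dvd_small[of "-5"] not_dvd_small[of 6] not_dvd_small[of "-6"] by auto
    from missing show False
    proof
      assume "\<not> E x (f (a - 1))"
      moreover have "E x (f (a + 4))" using nbr_adj_edge_far[OF x(1) a, of 4] not_dvd_le_4 far by simp
      ultimately show False
        using nbr_adj_edge_far_contra[OF x(1) a3 \<open>E x (f (a + 4))\<close> _ \<open>\<not> E x (f (a - 1))\<close>]
          not_dvd_le_4 far by simp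
    next
      assume "\<not> E x (f (a + 2))"
      moreover have "E x (f (a + -3))" "E x (f (a + -2))"
        using nbr_adj_edge_far[OF x(1) a, of "-3"] nbr_adj_edge_far[OF x(1) a, of "-2"]
          not_dvd_le_4 far by simp_all
      ultimately show False
        using nbr_adj_edge_far_contra[OF x(1) \<open>E x (f (a + -3))\<close> \<open>E x (f (a + -2))\<close> _
            \<open>\<not> E x (f (a + 2))\<close>]
          not_dvd_le_4 far by simp
    qed
  next
    assume "n = 5"
    then have "f (a + 4) = f (a - 1)" by (simp add: hole_eq_iff)
    from missing show False
    proof
      assume "\<not> E x (f (a - 1))"
      then have "E x (f (a + 2))"
        using nbr_adj_consecutive[OF x(1) a3] \<open>f (a + 4) = f (a - 1)\<close> by (simp add: algebra_simps)
      then show False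
        using nbr_adj_edge_far_contra[OF x(1) a(2) \<open>E x (f (a + 2))\<close> _ \<open>\<not> E x (f (a - 1))\<close>]
          not_dvd_le_4 by simp
    next
      assume "\<not> E x (f (a + 2))"
      then have "E x (f (a - 1))"
        using nbr_adj_consecutive[OF x(1) a3] \<open>f (a + 4) = f (a - 1)\<close> by (simp add: algebra_simps)
      then show False
        using nbr_adj_edge_far_contra[OF x(1) \<open>E x (f (a - 1))\<close> a(1) _ \<open>\<not> E x (f (a + 2))\<close>]
          not_dvd_le_4 by simp
    qed
  qed
qed

lemma complete_to_hole_adj_v:
  assumes "z \<in> V" "\<And>i. E z (f i)"
  shows "E z v"
proof (rule ccontr)
  assume "\<not> E z v"
  moreover have "z \<noteq> v" using assms(2) hole_not_adj_v by metis
  ultimately have "z \<in> nonnbrs V E v" using assms(1) sym by (auto simp: nonnbrs_def)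
  then show False using nonnbr_not_adj_consecutive assms(2) by blast
qed

lemma partial_to_hole_in_nonnbrs:
  assumes "w \<in> V" "E w (f i)" "\<not> E w (f j)"
  shows "w \<in> nonnbrs V E v"
proof -
  have "w \<noteq> v" using assms(2) hole_not_adj_v by auto
  moreover have "\<not> E v w" using nbr_adj_hole_complete[of w i j] assms(2,3) sym by blast
  ultimately show ?thesis using assms(1) by (auto simp: nonnbrs_def)
qed

text \<open>Otherwise u would be the centre of a fork with leaves v, f i and a hole vertex f m
  missed by s, the last edge f i s.\<close>

lemma complete_to_hole_adj_nonnbr:
  assumes u: "u \<in> V" "\<And>j. E u (f j)" and s: "s \<in> nonnbrs V E v" "E s (f i)"
  shows "E u s"
proof (rule ccontr)
  assume "\<not> E u s"
  obtain m where m: "\<not> E s (f m)" "m = i + 2 \<or> m = i + 3"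
    using nonnbr_not_adj_consecutive[OF s(1), of "i + 2"] by (auto simp: algebra_simps)
  then have "\<not> E (f m) (f i)" using not_dvd_le_4 hole_length by (auto simp: hole_adj_iff)
  then show False
    using no_fork[of u v "f m" "f i" s] u complete_to_hole_adj_v[OF u] v_in_V hole_in_V
      hole_not_adj_v nonnbrsD[OF s(1)] s(2) m(1) sym \<open>\<not> E u s\<close>
    by blast
qed

text \<open>Otherwise f i would be the centre of a fork with leaves f (i - 1), f (i + 1) and s,
  the last edge s u.\<close>

lemma anticomplete_to_hole_not_adj_nonnbr:
  assumes u: "u \<in> V" "\<And>j. \<not> E u (f j)" and s: "s \<in> nonnbrs V E v" "E s (f i)"
  shows "\<not> E u s"
proof
  assume "E u s"
  have "\<not> E s (f (i + 1))" "\<not> E s (f (i - 1))"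
    using nonnbr_not_adj_consecutive[OF s] nonnbr_not_adj_consecutive'[OF s] by auto
  moreover have "f (i - 1) \<noteq> f (i + 1)" "\<not> E (f (i - 1)) (f (i + 1))"
    using not_dvd_le_4 hole_length by (simp_all add: hole_eq_iff hole_adj_iff)
  ultimately show False
    using no_fork[of "f i" "f (i - 1)" "f (i + 1)" s u] hole_in_V u \<open>E u s\<close> s
      nonnbrsD[OF s(1)] sym hole_edge
    by blast
qed

definition attached :: "'a set" where
  "attached = {w \<in> V. w \<notin> range f \<and> (\<exists>i. E w (f i)) \<and> (\<exists>j. \<not> E w (f j))}"

lemma attachedD: "w \<in> attached \<Longrightarrow> w \<in> nonnbrs V E v \<and> (\<exists>i. E w (f i))"
  using partial_to_hole_in_nonnbrs by (auto simp: attached_def)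

lemma hole_attached_homogeneous:
  assumes u: "u \<in> V" "u \<notin> range f \<union> attached"
  shows "(\<forall>s\<in>range f \<union> attached. E u s) \<or> (\<forall>s\<in>range f \<union> attached. \<not> E u s)"
proof (cases "\<forall>j. E u (f j)")
  case True
  then have "E u s" if "s \<in> range f \<union> attached" for s
    using that complete_to_hole_adj_nonnbr[of u s] u attachedD by blast
  then show ?thesis by blast
next
  case False
  then have "\<not> E u (f j)" for j using u by (auto simp: attached_def)
  then have "\<not> E u s" if "s \<in> range f \<union> attached" for s
    using that anticomplete_to_hole_not_adj_nonnbr[of u s] u attachedD by blast
  then show ?thesis by blast
qed

text \<open>The hole with its attached vertices misses v, hence is a proper homogeneous set.\<close>

lemma homogeneous_set_exists: "\<exists>S. homogeneous_set V E S"
proof -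
  let ?K = "range f \<union> attached"
  have finite_V: "finite V" using graph by (simp add: graph_def)
  have "?K \<subseteq> V" using hole_in_V by (auto simp: attached_def)
  moreover have "v \<notin> ?K" using hole_not_adj_v attachedD by (auto simp: nonnbrs_def)
  then have "card ?K < card V"
    using \<open>?K \<subseteq> V\<close> v_in_V by (intro psubset_card_mono[OF finite_V]) blast
  moreover have "1 < card ?K"
  proof -
    have "f 0 \<noteq> f 1" using hole_edge(1)[of 0] irr by force
    moreover have "finite ?K" using \<open>?K \<subseteq> V\<close> finite_V finite_subset by blast
    ultimately show ?thesis using card_mono[of ?K "{f 0, f 1}"] by simp
  qed
  ultimately have "homogeneous_set V E ?K"
    unfolding homogeneous_set_def using hole_attached_homogeneous by blast
  then show ?thesis ..
qed

end

theorem theorem3p8: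
  fixes V :: "'a set" and E :: "'a \<Rightarrow> 'a \<Rightarrow> bool"
  assumes "graph V E"
    and "connected_graph V E"
    and "\<not> has_induced V E fork_V fork_E"
    and "\<not> has_induced V E codart_V codart_E"
  shows "(\<exists>S. homogeneous_set V E S) \<or>
         (\<forall>v\<in>V. perfect (nonnbrs V E v) (induced E (nonnbrs V E v)))"
proof (cases "\<exists>S. homogeneous_set V E S")
  case False
  have "perfect (nonnbrs V E v) (induced E (nonnbrs V E v))" if "v \<in> V" for v
  proof (rule perfect_if_paw_free_no_odd_hole)
    show "E x y \<Longrightarrow> E y x" "\<not> E x x" "finite (nonnbrs V E v)" for x y
      using assms(1) by (auto simp: graph_def nonnbrs_def)
    show "paw_free (nonnbrs V E v) E" using paw_free_nonnbrs[OF assms(1,4) \<open>v \<in> V\<close>] .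
    show "\<not> odd_hole (nonnbrs V E v) E f n" for f n
    proof
      assume "odd_hole (nonnbrs V E v) E f n"
      then interpret odd_hole_in_nonnbrs V E v f n
        using assms(1,3,4) \<open>v \<in> V\<close> by unfold_locales
      show False using homogeneous_set_exists False by blast
    qed
  qed
  then show ?thesis by blast
qed simp

end
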